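(* Let $S[1..n]$ be a string and $1\le x\le y\le n$. If a longest repeat $\mathrm{LR}_x^y$ exists, then every choice of $\mathrm{LR}_x^y$ is a useful LLR, i.e., it equals $\mathrm{LLR}_k$ for some position $k$, and it is not a substring of any other LLR.
   Context: For $1\le i\le j\le n$, $S[i..j]=S[i]\cdots S[j]$. A substring $S[i..j]$ covers $[x..y]$ if $i\le x\le y\le j$. A substring $S[i..j]$ is unique if there is no other substring $S[i'..j']$ with $S[i'..j']=S[i..j]$ and $i'\ne i$; it is a repeat otherwise. $\mathrm{LR}_x^y$ is a repeat $S[i..j]$ covering $[x..y]$ such that no repeat $S[i'..j']$ covering $[x..y]$ has $j'-i'>j-i$. The left-bounded longest repeat starting at position $k$, $\mathrm{LLR}_k$, is a repeat $S[k..j]$ such that either $j=n$ or $S[k..j+1]$ is unique (it exists iff $S[k]$ is a repeat, and is then unique as an occurrence). An LLR is useless if it is a substring (as a position interval: contained in the position interval) of another LLR; otherwise it is useful. *)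

theory Defs
  imports Main
begin

text \<open>Strings are lists; positions are 1-based, so S[k] = S ! (k - 1).
  A substring occurrence S[i..j] is identified with its position interval (i, j).\<close>

definition valid_iv :: "'a list \<Rightarrow> nat \<Rightarrow> nat \<Rightarrow> bool" where
  "valid_iv S i j \<longleftrightarrow> 1 \<le> i \<and> i \<le> j \<and> j \<le> length S"

definition substr :: "'a list \<Rightarrow> nat \<Rightarrow> nat \<Rightarrow> 'a list" where
  "substr S i j = map (\<lambda>k. S ! (k - 1)) [i..<Suc j]"

definition covers :: "nat \<Rightarrow> nat \<Rightarrow> nat \<Rightarrow> nat \<Rightarrow> bool" where
  "covers i j x y \<longleftrightarrow> i \<le> x \<and> x \<le> y \<and> y \<le> j"

definition is_repeat :: "'a list \<Rightarrow> nat \<Rightarrow> nat \<Rightarrow> bool" where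
  "is_repeat S i j \<longleftrightarrow> valid_iv S i j \<and>
     (\<exists>i' j'. valid_iv S i' j' \<and> substr S i' j' = substr S i j \<and> i' \<noteq> i)"

definition is_unique :: "'a list \<Rightarrow> nat \<Rightarrow> nat \<Rightarrow> bool" where
  "is_unique S i j \<longleftrightarrow> valid_iv S i j \<and> \<not> is_repeat S i j"

definition is_LR :: "'a list \<Rightarrow> nat \<Rightarrow> nat \<Rightarrow> nat \<Rightarrow> nat \<Rightarrow> bool" where
  "is_LR S x y i j \<longleftrightarrow> is_repeat S i j \<and> covers i j x y \<and>
     (\<forall>i' j'. is_repeat S i' j' \<and> covers i' j' x y \<longrightarrow> j' - i' \<le> j - i)"

definition is_LLR :: "'a list \<Rightarrow> nat \<Rightarrow> nat \<Rightarrow> bool" where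
  "is_LLR S k j \<longleftrightarrow> is_repeat S k j \<and> (j = length S \<or> is_unique S k (Suc j))"

text \<open>S[i..j] is an LLR (i.e. equals LLR_k for some k; necessarily k = i).\<close>
definition is_some_LLR :: "'a list \<Rightarrow> nat \<Rightarrow> nat \<Rightarrow> bool" where
  "is_some_LLR S i j \<longleftrightarrow> (\<exists>k. k = i \<and> is_LLR S k j)"

definition is_useful_LLR :: "'a list \<Rightarrow> nat \<Rightarrow> nat \<Rightarrow> bool" where
  "is_useful_LLR S i j \<longleftrightarrow> is_some_LLR S i j \<and>
     \<not> (\<exists>i' j'. is_some_LLR S i' j' \<and> (i', j') \<noteq> (i, j) \<and> i' \<le> i \<and> j \<le> j')"

end

theory Submission
  imports Defs
begin

text \<open>A repeat properly containing LR_x^y would also cover [x..y] and be longer.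
  Hence LR_x^y cannot be extended to the right as a repeat, which makes it an LLR, and no
  other LLR (being a repeat) can contain it, which makes it useful.\<close>

lemma is_LR_maximal_repeat:
  assumes "is_LR S x y i j" and "is_repeat S i' j'" and "i' \<le> i" and "j \<le> j'"
  shows "(i', j') = (i, j)"
proof -
  have "covers i' j' x y"
    using assms unfolding is_LR_def covers_def by auto
  then have "j' - i' \<le> j - i"
    using assms(1,2) unfolding is_LR_def by blast
  moreover have "i \<le> j"
    using assms(1) unfolding is_LR_def is_repeat_def valid_iv_def by blast
  ultimately show ?thesis
    using assms(3,4) by auto
qed

lemma is_LR_is_LLR:
  assumes "is_LR S x y i j"
  shows "is_LLR S i j"
proof (cases "j = length S")
  case True
  then show ?thesis
    using assms unfolding is_LR_def is_LLR_def by blast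
next
  case False
  have rep: "is_repeat S i j"
    using assms unfolding is_LR_def by blast
  then have "valid_iv S i (Suc j)"
    using False unfolding is_repeat_def valid_iv_def by auto
  moreover have "\<not> is_repeat S i (Suc j)"
    using is_LR_maximal_repeat[OF assms, of i "Suc j"] by auto
  ultimately show ?thesis
    using rep unfolding is_LLR_def is_unique_def by blast
qed

theorem lemma3:
  fixes S :: "'a list" and x y i j :: nat
  assumes "1 \<le> x" and "x \<le> y" and "y \<le> length S"
    and "is_LR S x y i j"
  shows "is_useful_LLR S i j"
proof -
  have "is_some_LLR S i j"
    using is_LR_is_LLR[OF assms(4)] unfolding is_some_LLR_def by blast
  moreover have "(i', j') = (i, j)"
    if "is_some_LLR S i' j'" "i' \<le> i" "j \<le> j'" for i' j'
    using that is_LR_maximal_repeat[OF assms(4)]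
    unfolding is_some_LLR_def is_LLR_def by blast
  ultimately show ?thesis
    unfolding is_useful_LLR_def by blast
qed

end
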